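(* Consider the simultaneous block-fading binary symmetric wiretap channel with parameters $q_1\in[0,1]$, $q_2=1-q_1$, and crossover probabilities satisfying $p_1\le p_2\le 0.5$, $p_1^*\le p_2^*\le 0.5$, $p_1\le p_1^*$, $p_2\le p_2^*$. Its secrecy capacity with channel state information available only at the decoders satisfies $$C^s_{\textrm{CSI-D}}\le q_1[H(p_1^* )-H(p_1)]+q_2[H(p_2^* )-H(p_2)].$$
   Context: $H(p)=-p\log_2 p-(1-p)\log_2(1-p)$ is the binary entropy function, and BSC$(p)$ denotes the binary symmetric channel with crossover probability $p$. Simultaneous block-fading binary symmetric wiretap channel: the transmitter (Alice) sends $NB$ binary symbols $X_{1:NB}$ organized in $B$ fading blocks of length $N$. Each block $k$ has a fading state $S_k\in\{1,2\}$, constant within the block, with $\Pr(S_k=1)=q_1$, $\Pr(S_k=2)=q_2$, states independent across blocks. Within block $k$, the legitimate receiver (Bob) observes the output $Y$ of $N$ independent uses of BSC$(p_{S_k})$, and the eavesdropper (Eve) observes the output $Z$ of $N$ independent uses of BSC$(p^*_{S_k})$ (same state for both, i.e. simultaneous fading). Let $\mathsf{S}=(S_1,\dots,S_B)$. A code consists of a (possibly randomized) encoder $X_{1:NB}=f(\mathsf{M})$ of a uniformly distributed message $\mathsf{M}$, which knows only the state distribution (not the realizations), and a decoder $\hat{\mathsf{M}}=g(Y_{1:NB},\mathsf{S})$ that knows the states; its rate is $\frac{1}{NB}\log_2$ of the message-set size. A rate $R$ is achievable if there are such codes of rate at least $R$ (asymptotically) with $N,B\to\infty$ such that $\Pr\{\mathsf{M}\ne\hat{\mathsf{M}}\}\to0$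 (reliability) and $\frac{1}{NB}I(\mathsf{M};Z_{1:NB}\mid\mathsf{S})\to 0$ (weak secrecy). $C^s_{\textrm{CSI-D}}$ is the supremum of achievable rates. *)

theory Defs
  imports "HOL-Probability.Probability"
begin

text \<open>Binary entropy function (in bits); note 0 * log 2 0 = 0 in Isabelle.\<close>
definition bin_entropy :: "real \<Rightarrow> real" where
  "bin_entropy p = - p * log 2 p - (1 - p) * log 2 (1 - p)"

definition state_pmf :: "real \<Rightarrow> nat pmf" where
  "state_pmf q1 = map_pmf (\<lambda>b. if b then 1 else 2) (bernoulli_pmf q1)"

definition xover :: "real \<Rightarrow> real \<Rightarrow> nat \<Rightarrow> real" where
  "xover a b s = (if s = 1 then a else b)"

definition chan_out :: "nat \<Rightarrow> nat \<Rightarrow> (nat \<Rightarrow> bool) \<Rightarrow> (nat \<Rightarrow> bool) \<Rightarrow> (nat \<Rightarrow> bool)" where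
  "chan_out N B x e = (\<lambda>i. if i < N * B then (x i \<noteq> e i) else False)"

text \<open>Noise pattern of N*B independent BSC uses; sample i lies in fading block i div N,
  whose state is s (i div N); in state t the crossover probability is xover a b t.\<close>
definition noise_pmf :: "nat \<Rightarrow> nat \<Rightarrow> real \<Rightarrow> real \<Rightarrow> (nat \<Rightarrow> nat) \<Rightarrow> (nat \<Rightarrow> bool) pmf" where
  "noise_pmf N B a b s = Pi_pmf {..<N * B} False (\<lambda>i. bernoulli_pmf (xover a b (s (i div N))))"

text \<open>The message is uniform on {..<K}; the encoder
  does not see the states (X is drawn independently of S); states are i.i.d. over the B blocks.\<close>
definition code_dist ::
  "nat \<Rightarrow> nat \<Rightarrow> real \<Rightarrow> real \<Rightarrow> real \<Rightarrow> real \<Rightarrow> real \<Rightarrow> nat \<Rightarrow> (nat \<Rightarrow> (nat \<Rightarrow> bool) pmf)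
    \<Rightarrow> (nat \<times> (nat \<Rightarrow> nat) \<times> (nat \<Rightarrow> bool) \<times> (nat \<Rightarrow> bool)) pmf" where
  "code_dist N B q1 p1 p2 ps1 ps2 K f = do {
     m \<leftarrow> pmf_of_set {..<K};
     x \<leftarrow> f m;
     s \<leftarrow> Pi_pmf {..<B} 1 (\<lambda>_. state_pmf q1);
     ey \<leftarrow> noise_pmf N B p1 p2 s;
     ez \<leftarrow> noise_pmf N B ps1 ps2 s;
     return_pmf (m, s, chan_out N B x ey, chan_out N B x ez) }"

text \<open>Conditional mutual information I(A;C|B) in bits of a discrete joint distribution J on
  triples (a,b,c) (all distributions arising here have finite support).\<close>
definition cond_mutual_info :: "('a \<times> 'b \<times> 'c) pmf \<Rightarrow> real" where
  "cond_mutual_info J =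
     (\<Sum>(a, b, c) \<in> set_pmf J. pmf J (a, b, c) *
        log 2 ((pmf J (a, b, c) * pmf (map_pmf (\<lambda>(a, b, c). b) J) b) /
               (pmf (map_pmf (\<lambda>(a, b, c). (a, b)) J) (a, b) *
                pmf (map_pmf (\<lambda>(a, b, c). (b, c)) J) (b, c))))"

definition err_prob where
  "err_prob N B q1 p1 p2 ps1 ps2 K f g =
     measure_pmf.prob (code_dist N B q1 p1 p2 ps1 ps2 K f) {(m, s, y, z). g y s \<noteq> m}"

definition leakage where
  "leakage N B q1 p1 p2 ps1 ps2 K f =
     cond_mutual_info (map_pmf (\<lambda>(m, s, y, z). (m, s, z)) (code_dist N B q1 p1 p2 ps1 ps2 K f))"

definition achievable_rate where
  "achievable_rate q1 p1 p2 ps1 ps2 R \<longleftrightarrow>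
    (\<exists>(N :: nat \<Rightarrow> nat) (B :: nat \<Rightarrow> nat) (K :: nat \<Rightarrow> nat)
       (f :: nat \<Rightarrow> nat \<Rightarrow> (nat \<Rightarrow> bool) pmf) (g :: nat \<Rightarrow> (nat \<Rightarrow> bool) \<Rightarrow> (nat \<Rightarrow> nat) \<Rightarrow> nat).
       filterlim N at_top sequentially \<and> filterlim B at_top sequentially \<and>
       (\<forall>n. K n \<ge> 1) \<and>
       (\<forall>\<epsilon>>0. eventually (\<lambda>n. log 2 (real (K n)) / real (N n * B n) \<ge> R - \<epsilon>) sequentially) \<and>
       (\<lambda>n. err_prob (N n) (B n) q1 p1 p2 ps1 ps2 (K n) (f n) (g n)) \<longlonglongrightarrow> 0 \<and>
       (\<lambda>n. leakage (N n) (B n) q1 p1 p2 ps1 ps2 (K n) (f n) / real (N n * B n)) \<longlonglongrightarrow> 0)"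

definition secrecy_capacity_CSI_D :: "real \<Rightarrow> real \<Rightarrow> real \<Rightarrow> real \<Rightarrow> real \<Rightarrow> ereal" where
  "secrecy_capacity_CSI_D q1 p1 p2 ps1 ps2 = Sup (ereal ` {R. achievable_rate q1 p1 p2 ps1 ps2 R})"

end

theory Submission
  imports Defs
begin

text \<open>Since \<open>p\<^sub>k \<le> p\<^sub>k\<^sup>* \<le> 1/2\<close>, BSC(\<open>p\<^sub>k\<^sup>*\<close>) is BSC(\<open>p\<^sub>k\<close>) followed by an independent BSC,
  so for every realisation of the fading states Eve's channel is a degraded version of Bob's.
  Fix the state vector \<open>s\<close>. Fano's inequality bounds \<open>(1 - P\<^sub>e) log K - 1\<close> by Bob's
  information \<open>I(M; Y)\<close>, and for additive noise the gap \<open>I(M; Y) - I(M; Z)\<close> is at most the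
  entropy gap of the two noise vectors, \<open>\<Sum>\<^sub>i H(p\<^sup>*(s\<^sub>i)) - H(p(s\<^sub>i))\<close>, by data processing
  for the extra noise. Averaging over the i.i.d. states turns this sum into
  \<open>NB (q\<^sub>1 [H(p\<^sub>1\<^sup>*) - H(p\<^sub>1)] + q\<^sub>2 [H(p\<^sub>2\<^sup>*) - H(p\<^sub>2)])\<close>; dividing by \<open>NB\<close> and
  letting the error probability and the normalised leakage vanish bounds every achievable rate.\<close>

lemma pmf_bind_eq_sum:
  assumes "finite A" "set_pmf D \<subseteq> A"
  shows "pmf (bind_pmf D K) x = (\<Sum>d\<in>A. pmf D d * pmf (K d) x)"
  unfolding pmf_bind using assms by (subst integral_measure_pmf[where A = A]) auto

lemma pmf_bind_tagged:
  assumes "finite (set_pmf S)" and "inj (\<lambda>(s, x). tag s x)"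
  shows "pmf (bind_pmf S (\<lambda>s. map_pmf (tag s) (X s))) (tag s x) = pmf S s * pmf (X s) x"
proof -
  have tag: "pmf (map_pmf (tag s') (X s')) (tag s x) = (if s' = s then pmf (X s) x else 0)" for s'
  proof (cases "s' = s")
    case True
    have "inj (tag s)" using assms(2) by (auto simp: inj_def)
    then show ?thesis using True by (simp add: pmf_map_inj')
  next
    case False
    then have "tag s x \<notin> range (tag s')" using assms(2) by (auto simp: inj_def)
    then show ?thesis using False by (auto intro: pmf_map_outside)
  qed
  have "pmf (bind_pmf S (\<lambda>s. map_pmf (tag s) (X s))) (tag s x)
      = (\<Sum>s'\<in>set_pmf S. if s' = s then pmf S s * pmf (X s) x else 0)"
    using assms(1) by (simp add: pmf_bind_eq_sum[of "set_pmf S"] tag if_distrib cong: if_cong)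
  also have "\<dots> = pmf S s * pmf (X s) x" using assms(1) by (simp add: set_pmf_eq)
  finally show ?thesis .
qed

lemma pmf_map_Pair: "pmf (map_pmf (Pair w') K) (w, v) = (if w' = w then pmf K v else 0)"
  by (auto simp: pmf_map_inj' inj_on_def intro!: pmf_map_outside)

lemma prob_bind_pmf_eq_sum:
  assumes "finite (set_pmf S)"
  shows "measure_pmf.prob (bind_pmf S F) E = (\<Sum>s\<in>set_pmf S. pmf S s * measure_pmf.prob (F s) E)"
proof -
  have "measure_pmf.prob M E = pmf (map_pmf (\<lambda>x. x \<in> E) M) True" for M :: "'b pmf"
    by (simp add: pmf_map vimage_def)
  then show ?thesis using assms by (simp add: map_bind_pmf pmf_bind_eq_sum[of "set_pmf S"])
qed

lemma sum_pmf_affine: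
  "finite (set_pmf S) \<Longrightarrow> (\<Sum>s\<in>set_pmf S. pmf S s * (a * x s + b)) = a * (\<Sum>s\<in>set_pmf S. pmf S s * x s) + b"
  by (simp add: distrib_left sum.distrib sum_distrib_left mult.left_commute
      flip: sum_distrib_right add: sum_pmf_eq_1)

lemma finite_set_Pi_pmf:
  assumes "finite A" "\<And>x. x \<in> A \<Longrightarrow> finite (set_pmf (p x))"
  shows "finite (set_pmf (Pi_pmf A d p))"
  using assms by (intro finite_subset[OF set_Pi_pmf_subset'[OF assms(1)]] finite_PiE_dflt) auto

lemma gibbs_inequality:
  fixes p q :: "'a \<Rightarrow> real"
  assumes "finite A" and p: "\<And>x. x \<in> A \<Longrightarrow> 0 \<le> p x" and q: "\<And>x. x \<in> A \<Longrightarrow> 0 \<le> q x"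
    and pq: "\<And>x. x \<in> A \<Longrightarrow> 0 < p x \<Longrightarrow> 0 < q x" and "sum q A \<le> sum p A"
  shows "(\<Sum>x\<in>A. p x * log 2 (q x / p x)) \<le> 0"
proof -
  have "(\<Sum>x\<in>A. p x * log 2 (q x / p x)) \<le> (\<Sum>x\<in>A. (q x - p x) / ln 2)"
  proof (rule sum_mono)
    fix x assume x: "x \<in> A"
    show "p x * log 2 (q x / p x) \<le> (q x - p x) / ln 2"
    proof (cases "p x = 0")
      case True
      then show ?thesis using q[OF x] by simp
    next
      case False
      then have pos: "0 < p x" "0 < q x" using p pq x by (auto simp: less_le)
      then have "p x * ln (q x / p x) \<le> p x * (q x / p x - 1)"
        by (intro mult_left_mono ln_le_minus_one) auto
      also have "\<dots> = q x - p x" using pos by (simp add: field_simps)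
      finally show ?thesis by (simp add: log_def divide_right_mono)
    qed
  qed
  also have "\<dots> = (sum q A - sum p A) / ln 2"
    by (simp add: sum_divide_distrib[symmetric] sum_subtractf)
  also have "\<dots> \<le> 0" using assms(5) by (simp add: divide_nonpos_pos)
  finally show ?thesis .
qed

lemma log_sum_inequality:
  fixes p q :: "'a \<Rightarrow> real"
  assumes "finite A" and p: "\<And>x. x \<in> A \<Longrightarrow> 0 \<le> p x" and q: "\<And>x. x \<in> A \<Longrightarrow> 0 \<le> q x"
    and pq: "\<And>x. x \<in> A \<Longrightarrow> 0 < p x \<Longrightarrow> 0 < q x" and "sum q A \<le> c"
  shows "sum p A * log 2 (sum p A / c) \<le> (\<Sum>x\<in>A. p x * log 2 (p x / q x))"
proof (cases "sum p A = 0")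
  case True
  then have "\<forall>x\<in>A. p x = 0" using sum_nonneg_eq_0_iff[OF assms(1)] p by blast
  then show ?thesis using True by simp
next
  case False
  then obtain x where x: "x \<in> A" "0 < p x" using p by (metis less_eq_real_def sum.neutral)
  have "q x \<le> sum q A" using assms(1) x q by (intro member_le_sum) auto
  then have sq: "0 < sum q A" using pq x by fastforce
  have sp: "0 < sum p A" using False sum_nonneg[of A p] p by fastforce
  define r where "r = sum p A / sum q A"
  have r: "0 < r" using sp sq by (simp add: r_def)
  \<comment> \<open>Gibbs applied to the rescaled weights \<open>r * q\<close>, which have the same total mass as \<open>p\<close>.\<close>
  have "(\<Sum>x\<in>A. p x * log 2 (r * q x / p x)) \<le> 0"
  proof (rule gibbs_inequality[OF assms(1) p])
    show "0 \<le> r * q x" if "x \<in> A" for x using r q that by simp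
    show "0 < r * q x" if "x \<in> A" "0 < p x" for x using r pq that by simp
    show "(\<Sum>x\<in>A. r * q x) \<le> sum p A"
      unfolding sum_distrib_left[symmetric] r_def using sq by simp
  qed
  moreover have "p x * log 2 (r * q x / p x) = p x * log 2 r - p x * log 2 (p x / q x)" if "x \<in> A" for x
  proof (cases "p x = 0")
    case False
    then have "0 < p x" "0 < q x" using p pq that by (auto simp: less_le)
    then show ?thesis using r by (simp add: log_divide_pos log_mult_pos algebra_simps)
  qed simp
  ultimately have "sum p A * log 2 r \<le> (\<Sum>x\<in>A. p x * log 2 (p x / q x))"
    by (simp add: sum_subtractf sum_distrib_right)
  moreover have "sum p A * log 2 (sum p A / c) \<le> sum p A * log 2 r"
    unfolding r_def using sp sq assms(5) by (intro mult_left_mono log_mono divide_left_mono) auto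
  ultimately show ?thesis by linarith
qed

section \<open>Entropy and mutual information of finitely supported distributions\<close>

definition pmf_entropy :: "'a pmf \<Rightarrow> real" where
  "pmf_entropy P = (\<Sum>x\<in>set_pmf P. - (pmf P x * log 2 (pmf P x)))"

definition pmf_mutual_info :: "('a \<times> 'b) pmf \<Rightarrow> real" where
  "pmf_mutual_info D =
     (\<Sum>(a, c)\<in>set_pmf D. pmf D (a, c) *
        log 2 (pmf D (a, c) / (pmf (map_pmf fst D) a * pmf (map_pmf snd D) c)))"

definition joint_pmf :: "'a pmf \<Rightarrow> ('a \<Rightarrow> 'b pmf) \<Rightarrow> ('a \<times> 'b) pmf" where
  "joint_pmf U G = bind_pmf U (\<lambda>m. map_pmf (Pair m) (G m))"

lemma pmf_entropy_eq_sum: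
  "finite A \<Longrightarrow> set_pmf P \<subseteq> A \<Longrightarrow> pmf_entropy P = (\<Sum>x\<in>A. - (pmf P x * log 2 (pmf P x)))"
  unfolding pmf_entropy_def by (rule sum.mono_neutral_left) (auto simp: set_pmf_eq)

lemma pmf_mutual_info_eq_sum:
  assumes "finite A" "finite C" "set_pmf D \<subseteq> A \<times> C"
  shows "pmf_mutual_info D = (\<Sum>a\<in>A. \<Sum>c\<in>C. pmf D (a, c) *
           log 2 (pmf D (a, c) / (pmf (map_pmf fst D) a * pmf (map_pmf snd D) c)))"
  unfolding pmf_mutual_info_def sum.cartesian_product
  using assms by (intro sum.mono_neutral_left) (auto simp: set_pmf_eq)

lemma pmf_joint_pmf:
  "finite (set_pmf U) \<Longrightarrow> pmf (joint_pmf U G) (m, c) = pmf U m * pmf (G m) c"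
  unfolding joint_pmf_def by (rule pmf_bind_tagged[where tag = Pair]) (auto simp: inj_def)

lemma map_fst_joint_pmf [simp]: "map_pmf fst (joint_pmf U G) = U"
  by (simp add: joint_pmf_def map_bind_pmf pmf.map_comp o_def map_pmf_const bind_return_pmf')

lemma map_snd_joint_pmf [simp]: "map_pmf snd (joint_pmf U G) = bind_pmf U G"
  by (simp add: joint_pmf_def map_bind_pmf pmf.map_comp o_def)

lemma set_joint_pmf: "set_pmf (joint_pmf U G) = (SIGMA m:set_pmf U. set_pmf (G m))"
  by (auto simp: joint_pmf_def set_bind_pmf)

lemma pmf_mutual_info_joint_pmf:
  assumes fU: "finite (set_pmf U)" and fG: "\<And>m. m \<in> set_pmf U \<Longrightarrow> finite (set_pmf (G m))"
  shows "pmf_mutual_info (joint_pmf U G)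
           = pmf_entropy (bind_pmf U G) - (\<Sum>m\<in>set_pmf U. pmf U m * pmf_entropy (G m))"
proof -
  define A where "A = set_pmf U"
  define C where "C = set_pmf (bind_pmf U G)"
  let ?D = "joint_pmf U G" and ?Gb = "pmf (bind_pmf U G)"
  have fA: "finite A" and fC: "finite C" using fU fG by (auto simp: A_def C_def set_bind_pmf)
  have GC: "\<And>m. m \<in> A \<Longrightarrow> set_pmf (G m) \<subseteq> C" by (auto simp: A_def C_def set_bind_pmf)
  have "pmf_mutual_info ?D = (\<Sum>m\<in>A. \<Sum>c\<in>C. pmf ?D (m, c) * log 2 (pmf ?D (m, c) / (pmf U m * ?Gb c)))"
    using fA fC by (subst pmf_mutual_info_eq_sum[of A C]) (auto simp: set_joint_pmf A_def C_def set_bind_pmf)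
  also have "\<dots> = (\<Sum>m\<in>A. \<Sum>c\<in>C. pmf U m * (pmf (G m) c * log 2 (pmf (G m) c))
                                 - pmf U m * pmf (G m) c * log 2 (?Gb c))"
  proof (intro sum.cong refl)
    fix m c assume m: "m \<in> A" and c: "c \<in> C"
    show "pmf ?D (m, c) * log 2 (pmf ?D (m, c) / (pmf U m * ?Gb c)) =
          pmf U m * (pmf (G m) c * log 2 (pmf (G m) c)) - pmf U m * pmf (G m) c * log 2 (?Gb c)"
    proof (cases "pmf (G m) c = 0")
      case False
      then have "0 < pmf U m" "0 < pmf (G m) c" using m by (auto simp: A_def pmf_positive less_le set_pmf_eq)
      moreover have "0 < ?Gb c"
        using False m by (intro pmf_positive) (force simp: A_def set_bind_pmf set_pmf_iff)
      ultimately show ?thesis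
        using fU by (simp add: pmf_joint_pmf log_divide_pos log_mult_pos algebra_simps)
    qed (simp add: pmf_joint_pmf fU)
  qed
  also have "\<dots> = (\<Sum>m\<in>A. pmf U m * (\<Sum>c\<in>C. pmf (G m) c * log 2 (pmf (G m) c)))
                 - (\<Sum>c\<in>C. (\<Sum>m\<in>A. pmf U m * pmf (G m) c) * log 2 (?Gb c))"
    by (simp add: sum_subtractf sum_distrib_left sum_distrib_right sum.swap[of _ C A])
  also have "(\<Sum>c\<in>C. (\<Sum>m\<in>A. pmf U m * pmf (G m) c) * log 2 (?Gb c)) = - pmf_entropy (bind_pmf U G)"
    using fU by (simp add: pmf_entropy_def C_def A_def sum_negf pmf_bind_eq_sum[symmetric])
  finally show ?thesis
    by (simp add: pmf_entropy_eq_sum[OF fC GC] sum_negf sum_distrib_left A_def)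
qed

lemma pmf_mutual_info_nonneg:
  assumes fD: "finite (set_pmf D)"
  shows "0 \<le> pmf_mutual_info D"
proof -
  define A where "A = set_pmf (map_pmf fst D)"
  define C where "C = set_pmf (map_pmf snd D)"
  define q where "q = (\<lambda>(a, c). pmf (map_pmf fst D) a * pmf (map_pmf snd D) c)"
  have fAC: "finite (A \<times> C)" using fD by (simp add: A_def C_def)
  have "(\<Sum>x\<in>set_pmf D. pmf D x * log 2 (q x / pmf D x)) \<le> 0"
  proof (rule gibbs_inequality)
    show "0 \<le> q x" for x by (simp add: q_def case_prod_beta)
    show "0 < q x" if "x \<in> set_pmf D" for x
      using that by (force simp: q_def case_prod_beta pmf_positive)
    have "sum q (set_pmf D) \<le> sum q (A \<times> C)"
      using fAC by (intro sum_mono2) (force simp: A_def C_def q_def)+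
    also have "\<dots> = 1"
      using fD by (simp add: q_def sum.cartesian_product[symmetric] sum_product[symmetric]
          sum_pmf_eq_1 A_def C_def)
    also have "1 = sum (pmf D) (set_pmf D)" using fD by (simp add: sum_pmf_eq_1)
    finally show "sum q (set_pmf D) \<le> sum (pmf D) (set_pmf D)" .
  qed (use fD in auto)
  moreover have "log 2 (q x / pmf D x) = - log 2 (pmf D x / q x)" for x
    by (metis inverse_divide log_inverse)
  ultimately show ?thesis
    by (simp add: pmf_mutual_info_def q_def case_prod_beta sum_negf)
qed

lemma pmf_bind_Pair_channel:
  assumes "finite W" "finite T" "set_pmf D \<subseteq> W \<times> T"
  shows "pmf (bind_pmf D (\<lambda>(w, t). map_pmf (Pair w) (K t))) (w, v) = (\<Sum>t\<in>T. pmf D (w, t) * pmf (K t) v)"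
proof -
  have "pmf (bind_pmf D (\<lambda>(w, t). map_pmf (Pair w) (K t))) (w, v)
      = (\<Sum>(w', t)\<in>W \<times> T. if w' = w then pmf D (w, t) * pmf (K t) v else 0)"
    using assms by (subst pmf_bind_eq_sum[of "W \<times> T"]) (auto simp: pmf_map_Pair intro!: sum.cong)
  also have "\<dots> = (\<Sum>t\<in>T. if w \<in> W then pmf D (w, t) * pmf (K t) v else 0)"
    using assms by (simp add: sum.cartesian_product[symmetric]) (subst sum.swap, simp add: sum.delta)
  also have "\<dots> = (\<Sum>t\<in>T. pmf D (w, t) * pmf (K t) v)"
    using assms(3) by (intro sum.cong) (force simp: set_pmf_eq)+
  finally show ?thesis .
qed

text \<open>Data processing. The difference of the two informations is a relative entropy over the
  triples \<open>(w, t, v)\<close>, nonnegative by Gibbs' inequality.\<close>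
lemma pmf_mutual_info_channel_le:
  assumes fD: "finite (set_pmf D)" and fK: "\<And>t. t \<in> snd ` set_pmf D \<Longrightarrow> finite (set_pmf (K t))"
  shows "pmf_mutual_info (bind_pmf D (\<lambda>(w, t). map_pmf (Pair w) (K t))) \<le> pmf_mutual_info D"
proof -
  define D' where "D' = bind_pmf D (\<lambda>(w, t). map_pmf (Pair w) (K t))"
  define W where "W = fst ` set_pmf D"
  define T where "T = snd ` set_pmf D"
  define V where "V = (\<Union>t\<in>T. set_pmf (K t))"
  have fin: "finite W" "finite T" "finite V" using fD fK by (auto simp: W_def T_def V_def)
  have sD: "set_pmf D \<subseteq> W \<times> T" by (force simp: W_def T_def)
  have sD': "set_pmf D' \<subseteq> W \<times> V" by (force simp: D'_def W_def V_def T_def set_bind_pmf)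
  have KV: "\<And>t. t \<in> T \<Longrightarrow> set_pmf (K t) \<subseteq> V" by (auto simp: V_def)
  have fst_D': "map_pmf fst D' = map_pmf fst D"
    by (simp add: D'_def map_bind_pmf pmf.map_comp o_def case_prod_beta map_pmf_const
        bind_return_pmf' flip: map_pmf_def)
  have snd_D': "map_pmf snd D' = bind_pmf (map_pmf snd D) K"
    by (simp add: D'_def map_bind_pmf pmf.map_comp o_def case_prod_beta bind_map_pmf)
  let ?DW = "pmf (map_pmf fst D)" and ?DT = "pmf (map_pmf snd D)" and ?DV = "pmf (map_pmf snd D')"
  have pD': "pmf D' (w, v) = (\<Sum>t\<in>T. pmf D (w, t) * pmf (K t) v)" for w v
    unfolding D'_def using fin(1,2) sD by (rule pmf_bind_Pair_channel)
  have pV: "?DV v = (\<Sum>t\<in>T. ?DT t * pmf (K t) v)" for v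
    unfolding snd_D' using fin by (intro pmf_bind_eq_sum) (auto simp: T_def)
  define p where "p = (\<lambda>(w, t, v). pmf D (w, t) * pmf (K t) v)"
  define q where "q = (\<lambda>(w, t, v). pmf D' (w, v) * ?DT t * pmf (K t) v / ?DV v)"
  let ?X = "W \<times> T \<times> V"
  have pos: "0 < pmf D' (w, v) \<and> 0 < ?DT t \<and> 0 < ?DV v \<and> 0 < ?DW w \<and> 0 < pmf D (w, t) \<and> 0 < pmf (K t) v"
    if "(w, t, v) \<in> ?X" "0 < p (w, t, v)" for w t v
  proof -
    have d: "0 < pmf D (w, t)" and k: "0 < pmf (K t) v"
      using that by (auto simp: p_def zero_less_mult_iff)
    then have "(w, t) \<in> set_pmf D" by (simp add: set_pmf_eq)
    then have "0 < ?DT t" "0 < ?DW w" by (force intro: pmf_positive)+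
    moreover have "pmf D (w, t) * pmf (K t) v \<le> pmf D' (w, v)" "?DT t * pmf (K t) v \<le> ?DV v"
      unfolding pD' pV using fin that by (auto intro!: member_le_sum)
    ultimately show ?thesis using d k by (smt (verit) mult_pos_pos)
  qed
  have gibbs: "(\<Sum>x\<in>?X. p x * log 2 (q x / p x)) \<le> 0"
  proof (rule gibbs_inequality)
    show "0 < q x" if "x \<in> ?X" "0 < p x" for x
      using that pos[of "fst x" "fst (snd x)" "snd (snd x)"] by (auto simp: q_def)
    have "sum p ?X = (\<Sum>w\<in>W. \<Sum>t\<in>T. pmf D (w, t) * (\<Sum>v\<in>V. pmf (K t) v))"
      by (simp add: p_def sum.cartesian_product sum_distrib_left)
    also have "\<dots> = 1" using fin KV sD by (simp add: sum_pmf_eq_1 sum.cartesian_product)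
    finally have "sum p ?X = 1" .
    have "sum q ?X = (\<Sum>w\<in>W. \<Sum>v\<in>V. pmf D' (w, v) / ?DV v * (\<Sum>t\<in>T. ?DT t * pmf (K t) v))"
      by (simp add: q_def sum.cartesian_product[symmetric] sum.swap[of _ T V] sum_distrib_left mult_ac)
    also have "\<dots> \<le> (\<Sum>w\<in>W. \<Sum>v\<in>V. pmf D' (w, v))"
      unfolding pV[symmetric] by (intro sum_mono) (auto simp: divide_simps)
    also have "\<dots> = 1" using fin sD' by (simp add: sum_pmf_eq_1 sum.cartesian_product)
    finally show "sum q ?X \<le> sum p ?X" using \<open>sum p ?X = 1\<close> by simp
  qed (use fin in \<open>auto simp: p_def q_def\<close>)
  have mi_D: "pmf_mutual_info D = (\<Sum>(w, t, v)\<in>?X. p (w, t, v) * log 2 (pmf D (w, t) / (?DW w * ?DT t)))"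
  proof -
    have "pmf_mutual_info D = (\<Sum>w\<in>W. \<Sum>t\<in>T. (\<Sum>v\<in>V. pmf (K t) v) *
            (pmf D (w, t) * log 2 (pmf D (w, t) / (?DW w * ?DT t))))"
      using fin sD KV by (simp add: pmf_mutual_info_eq_sum[of W T] sum_pmf_eq_1)
    then show ?thesis by (simp add: p_def sum.cartesian_product[symmetric] sum_distrib_right mult_ac)
  qed
  have mi_D': "pmf_mutual_info D' = (\<Sum>(w, t, v)\<in>?X. p (w, t, v) * log 2 (pmf D' (w, v) / (?DW w * ?DV v)))"
  proof -
    have "pmf_mutual_info D' = (\<Sum>w\<in>W. \<Sum>v\<in>V. (\<Sum>t\<in>T. pmf D (w, t) * pmf (K t) v) *
            log 2 (pmf D' (w, v) / (?DW w * ?DV v)))"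
      using fin sD' by (simp add: pmf_mutual_info_eq_sum[of W V] fst_D' pD'[symmetric])
    then show ?thesis
      by (simp add: p_def sum.cartesian_product[symmetric] sum_distrib_right sum.swap[of _ V T])
  qed
  have pointwise: "p x * log 2 (pmf D (w, t) / (?DW w * ?DT t)) - p x * log 2 (pmf D' (w, v) / (?DW w * ?DV v))
      = - (p x * log 2 (q x / p x))" if "x = (w, t, v)" "x \<in> ?X" for x w t v
  proof (cases "0 < p x")
    case True
    then have P: "0 < pmf D' (w, v)" "0 < ?DT t" "0 < ?DV v" "0 < ?DW w" "0 < pmf D (w, t)" "0 < pmf (K t) v"
      using pos[of w t v] that by auto
    then have "q x / p x = (pmf D' (w, v) * ?DT t) / (?DV v * pmf D (w, t))"
      using that by (simp add: q_def p_def field_simps)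
    then show ?thesis using P by (simp add: log_divide_pos log_mult_pos algebra_simps)
  next
    case False
    then have "p x = 0" by (simp add: p_def that less_le)
    then show ?thesis by simp
  qed
  have "pmf_mutual_info D - pmf_mutual_info D' = (\<Sum>x\<in>?X. - (p x * log 2 (q x / p x)))"
    unfolding mi_D mi_D' sum_subtractf[symmetric] by (intro sum.cong refl) (auto simp: pointwise)
  then show ?thesis using gibbs by (simp add: D'_def sum_negf)
qed

lemma pmf_entropy_map_inj:
  assumes "inj_on f (set_pmf P)"
  shows "pmf_entropy (map_pmf f P) = pmf_entropy P"
  unfolding pmf_entropy_def using assms
  by (simp add: sum.reindex pmf_map_inj cong: sum.cong)

lemma pmf_entropy_pair:
  assumes fP: "finite (set_pmf P)" and fQ: "finite (set_pmf Q)"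
  shows "pmf_entropy (pair_pmf P Q) = pmf_entropy P + pmf_entropy Q"
proof -
  let ?h = "\<lambda>P x. - (pmf P x * log 2 (pmf P x))"
  have "pmf_entropy (pair_pmf P Q) = (\<Sum>a\<in>set_pmf P. \<Sum>b\<in>set_pmf Q. pmf Q b * ?h P a + pmf P a * ?h Q b)"
    unfolding pmf_entropy_def set_pair_pmf sum.cartesian_product'
    by (intro sum.cong refl) (simp add: pmf_pair pmf_positive log_mult_pos algebra_simps)
  also have "\<dots> = (\<Sum>a\<in>set_pmf P. (\<Sum>b\<in>set_pmf Q. pmf Q b) * ?h P a
                                 + pmf P a * (\<Sum>b\<in>set_pmf Q. ?h Q b))"
    by (simp only: sum.distrib sum_distrib_left sum_distrib_right)
  also have "\<dots> = pmf_entropy P + (\<Sum>a\<in>set_pmf P. pmf P a) * pmf_entropy Q"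
    using fQ by (auto simp: sum_pmf_eq_1 pmf_entropy_def sum_distrib_right simp flip: sum.distrib
        intro!: sum.cong)
  finally show ?thesis using fP by (simp add: sum_pmf_eq_1)
qed

section \<open>Additive binary noise\<close>

definition bit_xor :: "('a \<Rightarrow> bool) \<Rightarrow> ('a \<Rightarrow> bool) \<Rightarrow> ('a \<Rightarrow> bool)" where
  "bit_xor x y = (\<lambda>i. x i \<noteq> y i)"

lemma bit_xor_assoc: "bit_xor x (bit_xor e w) = bit_xor (bit_xor x e) w"
  by (auto simp: bit_xor_def)

lemma inj_bit_xor_right: "inj (\<lambda>x. bit_xor x w)"
  by (auto simp: inj_def bit_xor_def fun_eq_iff)

definition xor_conv :: "('a \<Rightarrow> bool) pmf \<Rightarrow> ('a \<Rightarrow> bool) pmf \<Rightarrow> ('a \<Rightarrow> bool) pmf" where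
  "xor_conv P Q = bind_pmf P (\<lambda>x. map_pmf (bit_xor x) Q)"

lemma xor_conv_commute: "xor_conv P R = bind_pmf R (\<lambda>w. map_pmf (\<lambda>x. bit_xor x w) P)"
  unfolding xor_conv_def map_pmf_def by (rule bind_commute_pmf)

lemma xor_conv_assoc: "xor_conv P (xor_conv Q R) = xor_conv (xor_conv P Q) R"
  by (simp add: xor_conv_def map_pmf_def bind_assoc_pmf bind_return_pmf bit_xor_assoc)

lemma xor_conv_bind: "xor_conv (bind_pmf U F) R = bind_pmf U (\<lambda>m. xor_conv (F m) R)"
  by (simp add: xor_conv_def bind_assoc_pmf)

lemma finite_set_xor_conv:
  "finite (set_pmf P) \<Longrightarrow> finite (set_pmf Q) \<Longrightarrow> finite (set_pmf (xor_conv P Q))"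
  by (simp add: xor_conv_def set_bind_pmf)

text \<open>Adding a fixed \<open>w\<close> is a bijection, so \<open>H(X \<oplus> W | W) = H(X)\<close>.\<close>
lemma pmf_mutual_info_xor_noise:
  assumes "finite (set_pmf P)" "finite (set_pmf R)"
  shows "pmf_mutual_info (joint_pmf R (\<lambda>w. map_pmf (\<lambda>x. bit_xor x w) P))
           = pmf_entropy (xor_conv P R) - pmf_entropy P"
proof -
  have "pmf_entropy (map_pmf (\<lambda>x. bit_xor x w) P) = pmf_entropy P" for w
    using inj_bit_xor_right by (auto intro: pmf_entropy_map_inj inj_on_subset)
  then show ?thesis
    using assms by (simp add: pmf_mutual_info_joint_pmf xor_conv_commute
        sum_distrib_right[symmetric] sum_pmf_eq_1)
qed

lemma pmf_entropy_le_xor_conv: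
  assumes "finite (set_pmf P)" "finite (set_pmf R)"
  shows "pmf_entropy P \<le> pmf_entropy (xor_conv P R)"
  using pmf_mutual_info_nonneg[of "joint_pmf R (\<lambda>w. map_pmf (\<lambda>x. bit_xor x w) P)"]
    pmf_mutual_info_xor_noise[OF assms] assms
  by (simp add: set_joint_pmf)

text \<open>Data processing along the chain \<open>W \<rightarrow> Q \<oplus> W \<rightarrow> X \<oplus> Q \<oplus> W\<close>, with \<open>W \<sim> R\<close>.\<close>
lemma pmf_entropy_xor_conv_increment_le:
  assumes fP: "finite (set_pmf P)" and fQ: "finite (set_pmf Q)" and fR: "finite (set_pmf R)"
  shows "pmf_entropy (xor_conv (xor_conv P Q) R) - pmf_entropy (xor_conv P Q)
           \<le> pmf_entropy (xor_conv Q R) - pmf_entropy Q"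
proof -
  define D where "D = joint_pmf R (\<lambda>w. map_pmf (\<lambda>e. bit_xor e w) Q)"
  have "bind_pmf D (\<lambda>(w, t). map_pmf (Pair w) (map_pmf (\<lambda>x. bit_xor x t) P))
      = joint_pmf R (\<lambda>w. map_pmf (\<lambda>u. bit_xor u w) (xor_conv P Q))"
  proof -
    have "bind_pmf D (\<lambda>(w, t). map_pmf (Pair w) (map_pmf (\<lambda>x. bit_xor x t) P))
        = bind_pmf R (\<lambda>w. bind_pmf Q (\<lambda>e. bind_pmf P (\<lambda>x. return_pmf (w, bit_xor x (bit_xor e w)))))"
      by (simp add: D_def joint_pmf_def map_pmf_def bind_assoc_pmf bind_return_pmf)
    also have "\<dots> = bind_pmf R (\<lambda>w. bind_pmf P (\<lambda>x. bind_pmf Q (\<lambda>e. return_pmf (w, bit_xor (bit_xor x e) w))))"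
      by (subst bind_commute_pmf) (simp add: bit_xor_assoc)
    finally show ?thesis
      by (simp add: joint_pmf_def xor_conv_def map_pmf_def bind_assoc_pmf bind_return_pmf)
  qed
  then have "pmf_entropy (xor_conv (xor_conv P Q) R) - pmf_entropy (xor_conv P Q)
      \<le> pmf_mutual_info D"
    using pmf_mutual_info_channel_le[of D "\<lambda>t. map_pmf (\<lambda>x. bit_xor x t) P"] fP fQ fR
    by (simp add: D_def set_joint_pmf pmf_mutual_info_xor_noise finite_set_xor_conv)
  also have "pmf_mutual_info D = pmf_entropy (xor_conv Q R) - pmf_entropy Q"
    unfolding D_def using fQ fR by (rule pmf_mutual_info_xor_noise)
  finally show ?thesis .
qed

lemma pmf_entropy_bernoulli: "0 \<le> r \<Longrightarrow> r \<le> 1 \<Longrightarrow> pmf_entropy (bernoulli_pmf r) = bin_entropy r"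
  by (subst pmf_entropy_eq_sum[of UNIV]) (auto simp: UNIV_bool bin_entropy_def)

lemma pmf_entropy_Pi_bernoulli:
  assumes "finite A" "\<And>i. i \<in> A \<Longrightarrow> 0 \<le> r i \<and> r i \<le> 1"
  shows "pmf_entropy (Pi_pmf A False (\<lambda>i. bernoulli_pmf (r i))) = (\<Sum>i\<in>A. bin_entropy (r i))"
  using assms
proof (induction A rule: finite_induct)
  case empty
  then show ?case by (simp add: pmf_entropy_def)
next
  case (insert x A)
  let ?P = "Pi_pmf A False (\<lambda>i. bernoulli_pmf (r i))"
  have fin: "finite (set_pmf ?P)" using insert.hyps by (simp add: finite_set_Pi_pmf)
  have "inj_on (\<lambda>(y, f). f(x := y)) (set_pmf (pair_pmf (bernoulli_pmf (r x)) ?P))"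
  proof (rule inj_onI, clarify)
    fix y f y' f'
    assume "(y, f) \<in> set_pmf (pair_pmf (bernoulli_pmf (r x)) ?P)"
      "(y', f') \<in> set_pmf (pair_pmf (bernoulli_pmf (r x)) ?P)" and eq: "f(x := y) = f'(x := y')"
    then have "f x = False" "f' x = False"
      using insert.hyps set_Pi_pmf_subset[of A False "\<lambda>i. bernoulli_pmf (r i)"]
      by (auto simp: set_pair_pmf)
    then have "f z = f' z" for z using fun_cong[OF eq, of z] by (cases "z = x") auto
    moreover have "y = y'" using fun_cong[OF eq, of x] by simp
    ultimately show "y = y' \<and> f = f'" by auto
  qed
  then have "pmf_entropy (Pi_pmf (insert x A) False (\<lambda>i. bernoulli_pmf (r i)))
      = pmf_entropy (pair_pmf (bernoulli_pmf (r x)) ?P)"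
    using insert.hyps by (simp add: Pi_pmf_insert pmf_entropy_map_inj)
  also have "\<dots> = bin_entropy (r x) + pmf_entropy ?P"
    using fin insert.prems by (simp add: pmf_entropy_pair pmf_entropy_bernoulli)
  finally show ?case using insert by simp
qed

lemma bind_bernoulli_xor_bernoulli:
  assumes "0 \<le> a" "a \<le> 1" "0 \<le> c" "c \<le> 1"
  shows "bind_pmf (bernoulli_pmf a) (\<lambda>x. map_pmf (\<lambda>e. x \<noteq> e) (bernoulli_pmf c))
           = bernoulli_pmf (a + c - 2 * a * c)"
proof (rule pmf_eqI)
  fix y :: bool
  have "0 \<le> a * (1 - c) + c * (1 - a)" "0 \<le> (1 - a) * (1 - c) + a * c"
    using assms by simp_all
  then have range: "0 \<le> a + c - 2 * a * c" "a + c - 2 * a * c \<le> 1"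
    by (simp_all add: algebra_simps)
  have "pmf (map_pmf (\<lambda>e. x \<noteq> e) (bernoulli_pmf c)) y = pmf (bernoulli_pmf c) (x \<noteq> y)" for x
  proof -
    have "(\<lambda>e. x \<noteq> e) -` {y} = {x \<noteq> y}" by auto
    then show ?thesis by (simp add: pmf_map measure_pmf_single)
  qed
  then have "pmf (bind_pmf (bernoulli_pmf a) (\<lambda>x. map_pmf (\<lambda>e. x \<noteq> e) (bernoulli_pmf c))) y
      = (\<Sum>x\<in>UNIV. pmf (bernoulli_pmf a) x * pmf (bernoulli_pmf c) (x \<noteq> y))"
    by (subst pmf_bind_eq_sum[of UNIV]) auto
  then show "pmf (bind_pmf (bernoulli_pmf a) (\<lambda>x. map_pmf (\<lambda>e. x \<noteq> e) (bernoulli_pmf c))) y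
      = pmf (bernoulli_pmf (a + c - 2 * a * c)) y"
    using assms range by (cases y) (simp_all add: UNIV_bool algebra_simps)
qed

lemma Pi_pmf_xor_conv:
  assumes "finite A"
  shows "xor_conv (Pi_pmf A False a) (Pi_pmf A False c)
           = Pi_pmf A False (\<lambda>i. bind_pmf (a i) (\<lambda>x. map_pmf (\<lambda>e. x \<noteq> e) (c i)))"
proof -
  have "Pi_pmf A False (\<lambda>i. bind_pmf (a i) (\<lambda>x. map_pmf (\<lambda>e. x \<noteq> e) (c i)))
      = bind_pmf (Pi_pmf A False a) (\<lambda>f. Pi_pmf A False (\<lambda>i. bind_pmf (c i) (\<lambda>e. return_pmf (f i \<noteq> e))))"
    using assms by (simp add: Pi_pmf_bind[where d' = False] map_pmf_def)
  also have "\<dots> = bind_pmf (Pi_pmf A False a) (\<lambda>f. bind_pmf (Pi_pmf A False c)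
                    (\<lambda>g. return_pmf (\<lambda>i. if i \<in> A then f i \<noteq> g i else False)))"
    using assms by (simp add: Pi_pmf_bind[where d' = False])
  also have "\<dots> = xor_conv (Pi_pmf A False a) (Pi_pmf A False c)"
    unfolding xor_conv_def map_pmf_def
  proof (intro bind_pmf_cong refl)
    fix f g assume "f \<in> set_pmf (Pi_pmf A False a)" "g \<in> set_pmf (Pi_pmf A False c)"
    then have "\<forall>x. x \<notin> A \<longrightarrow> f x = False" "\<forall>x. x \<notin> A \<longrightarrow> g x = False"
      using set_Pi_pmf_subset[OF assms, of False a] set_Pi_pmf_subset[OF assms, of False c] by blast+
    then show "return_pmf (\<lambda>i. if i \<in> A then f i \<noteq> g i else False) = return_pmf (bit_xor f g)"
      by (auto simp: bit_xor_def)
  qed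
  finally show ?thesis ..
qed

text \<open>Crossover probability of the BSC that, cascaded after BSC(\<open>a\<close>), yields BSC(\<open>b\<close>);
  the cascade of BSC(\<open>a\<close>) and BSC(\<open>c\<close>) is BSC(\<open>a + c - 2ac\<close>). For \<open>a = 1/2\<close> any value works.\<close>
definition degrading_xover :: "real \<Rightarrow> real \<Rightarrow> real" where
  "degrading_xover a b = (if a = 1/2 then 0 else (b - a) / (1 - 2 * a))"

lemma degrading_xover:
  assumes "0 \<le> a" "a \<le> b" "b \<le> 1/2"
  shows "0 \<le> degrading_xover a b" "degrading_xover a b \<le> 1"
    and "a + degrading_xover a b - 2 * a * degrading_xover a b = b"
proof -
  show "0 \<le> degrading_xover a b" using assms by (auto simp: degrading_xover_def)
  show "degrading_xover a b \<le> 1" using assms by (auto simp: degrading_xover_def divide_simps)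
  show "a + degrading_xover a b - 2 * a * degrading_xover a b = b"
    using assms by (auto simp: degrading_xover_def divide_simps algebra_simps)
qed

lemma finite_set_noise_pmf [simp]: "finite (set_pmf (noise_pmf N B a b s))"
  by (simp add: noise_pmf_def finite_set_Pi_pmf)

lemma noise_pmf_degraded:
  assumes "0 \<le> p1" "p1 \<le> ps1" "ps1 \<le> 1/2" "0 \<le> p2" "p2 \<le> ps2" "ps2 \<le> 1/2"
  obtains R where "finite (set_pmf R)" "noise_pmf N B ps1 ps2 s = xor_conv (noise_pmf N B p1 p2 s) R"
proof
  let ?c = "\<lambda>t. degrading_xover (xover p1 p2 t) (xover ps1 ps2 t)"
  have c: "0 \<le> xover p1 p2 t" "xover p1 p2 t \<le> xover ps1 ps2 t" "xover ps1 ps2 t \<le> 1/2" for t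
    using assms by (auto simp: xover_def)
  have "bernoulli_pmf (xover ps1 ps2 t) = bind_pmf (bernoulli_pmf (xover p1 p2 t))
      (\<lambda>x. map_pmf (\<lambda>e. x \<noteq> e) (bernoulli_pmf (?c t)))" for t
    using c[of t] degrading_xover[OF c[of t]] by (subst bind_bernoulli_xor_bernoulli) auto
  then show "noise_pmf N B ps1 ps2 s
      = xor_conv (noise_pmf N B p1 p2 s) (Pi_pmf {..<N * B} False (\<lambda>i. bernoulli_pmf (?c (s (i div N)))))"
    by (simp add: noise_pmf_def Pi_pmf_xor_conv)
qed (simp add: finite_set_Pi_pmf)

lemma pmf_entropy_noise_pmf:
  assumes "0 \<le> a" "a \<le> 1" "0 \<le> b" "b \<le> 1"
  shows "pmf_entropy (noise_pmf N B a b s) = (\<Sum>i<N * B. bin_entropy (xover a b (s (i div N))))"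
  unfolding noise_pmf_def using assms by (intro pmf_entropy_Pi_bernoulli) (auto simp: xover_def)

text \<open>Unconditionally the extra noise \<open>R\<close> only raises the output entropy, and conditionally on
  each message it raises it by at most \<open>H(Q \<oplus> R) - H(Q)\<close>.\<close>
lemma pmf_mutual_info_degraded_gap_le:
  assumes fU: "finite (set_pmf U)" and fP: "\<And>m. finite (set_pmf (P m))"
    and fQ: "finite (set_pmf Q)" and fR: "finite (set_pmf R)"
  shows "pmf_mutual_info (joint_pmf U (\<lambda>m. xor_conv (P m) Q))
           - pmf_mutual_info (joint_pmf U (\<lambda>m. xor_conv (P m) (xor_conv Q R)))
         \<le> pmf_entropy (xor_conv Q R) - pmf_entropy Q"
proof -
  let ?Y = "\<lambda>m. xor_conv (P m) Q"
  have fY: "finite (set_pmf (?Y m))" for m using fP fQ by (simp add: finite_set_xor_conv)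
  have "pmf_entropy (bind_pmf U ?Y) \<le> pmf_entropy (bind_pmf U (\<lambda>m. xor_conv (?Y m) R))"
    using pmf_entropy_le_xor_conv[of "bind_pmf U ?Y" R] fU fY fR
    by (simp add: xor_conv_bind set_bind_pmf)
  moreover have "(\<Sum>m\<in>set_pmf U. pmf U m * pmf_entropy (xor_conv (?Y m) R))
      - (\<Sum>m\<in>set_pmf U. pmf U m * pmf_entropy (?Y m))
      \<le> (\<Sum>m\<in>set_pmf U. pmf U m * (pmf_entropy (xor_conv Q R) - pmf_entropy Q))"
    unfolding sum_subtractf[symmetric] right_diff_distrib[symmetric]
    using pmf_entropy_xor_conv_increment_le[OF fP fQ fR] by (intro sum_mono mult_left_mono) auto
  ultimately show ?thesis
    using fU fY fR by (simp add: pmf_mutual_info_joint_pmf xor_conv_assoc finite_set_xor_conv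
        sum_distrib_right[symmetric] sum_pmf_eq_1)
qed

section \<open>Fano's inequality\<close>

lemma bin_entropy_le_one:
  assumes "0 \<le> x" "x \<le> 1"
  shows "bin_entropy x \<le> 1"
proof -
  let ?p = "\<lambda>b::bool. if b then x else 1 - x"
  have "y * log 2 ((1/2) / y) = - y - y * log 2 y" if "0 \<le> y" for y :: real
  proof (cases "y = 0")
    case False
    then have eq: "log 2 ((1/2) / y) = - 1 - log 2 y" using that by (simp add: log_divide_pos log_mult_pos)
    show ?thesis by (subst eq) (simp add: algebra_simps)
  qed simp
  then have "?p b * log 2 ((1/2) / ?p b) = - ?p b - ?p b * log 2 (?p b)" for b
    using assms by simp
  moreover have "(\<Sum>b\<in>UNIV. ?p b * log 2 ((1/2) / ?p b)) \<le> 0"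
    using assms by (intro gibbs_inequality) (auto simp: UNIV_bool)
  ultimately show ?thesis by (simp add: UNIV_bool bin_entropy_def)
qed

text \<open>Splitting the mutual information into the correctly and the wrongly decoded pairs and
  applying the log-sum inequality to each part gives \<open>(1 - P\<^sub>e) log K - H(P\<^sub>e)\<close>: on correctly
  decoded pairs the message is a function of the output, so there the product of the
  marginals has mass at most \<open>1/K\<close>.\<close>
lemma fano_inequality:
  fixes K :: nat and h :: "'b \<Rightarrow> nat"
  assumes K: "K \<ge> 1" and fG: "\<And>m. finite (set_pmf (G m))"
  defines "D \<equiv> joint_pmf (pmf_of_set {..<K}) G"
  shows "(1 - measure_pmf.prob D {(m, c). h c \<noteq> m}) * log 2 K - 1 \<le> pmf_mutual_info D"
proof -
  let ?U = "pmf_of_set {..<K}"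
  have sU: "set_pmf ?U = {..<K}" and pU: "\<And>m. m \<in> set_pmf ?U \<Longrightarrow> pmf ?U m = 1 / K"
    using K by (auto simp: lessThan_empty_iff)
  have fD: "finite (set_pmf D)" using fG by (simp add: D_def set_joint_pmf sU)
  let ?C = "map_pmf snd D"
  have fC: "finite (set_pmf ?C)" using fD by simp
  define q where "q = (\<lambda>(m, c). pmf ?U m * pmf ?C c)"
  have q_pos: "0 < q x" if "x \<in> set_pmf D" for x
  proof -
    have "fst x \<in> set_pmf ?U" "snd x \<in> set_pmf ?C" using that by (auto simp: D_def set_joint_pmf)
    then show ?thesis by (simp add: q_def case_prod_beta pmf_positive)
  qed
  define A1 where "A1 = {x \<in> set_pmf D. h (snd x) = fst x}"
  define A2 where "A2 = {x \<in> set_pmf D. h (snd x) \<noteq> fst x}"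
  have fA: "finite A1" "finite A2" using fD by (simp_all add: A1_def A2_def)
  have split: "sum f (set_pmf D) = sum f A1 + sum f A2" for f :: "_ \<Rightarrow> real"
    using fA by (subst sum.union_disjoint[symmetric]) (auto simp: A1_def A2_def intro: sum.cong)
  have mi: "pmf_mutual_info D = (\<Sum>x\<in>A1. pmf D x * log 2 (pmf D x / q x))
                              + (\<Sum>x\<in>A2. pmf D x * log 2 (pmf D x / q x))"
    unfolding split[symmetric] by (simp add: pmf_mutual_info_def q_def D_def case_prod_beta)
  have "A2 = {(m, c). h c \<noteq> m} \<inter> set_pmf D" by (auto simp: A2_def)
  then have "measure_pmf.prob D A2 = measure_pmf.prob D {(m, c). h c \<noteq> m}"
    by (simp only: measure_Int_set_pmf)
  then have err: "measure_pmf.prob D {(m, c). h c \<noteq> m} = sum (pmf D) A2"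
    by (simp add: measure_measure_pmf_finite[OF fA(2)])
  have total: "sum (pmf D) A1 + sum (pmf D) A2 = 1" using fD by (simp add: split[symmetric] sum_pmf_eq_1)
  have "sum q A1 = 1 / K * sum (pmf ?C) (snd ` A1)"
  proof -
    have "inj_on snd A1" by (auto simp: inj_on_def A1_def prod_eq_iff)
    moreover have "q x = 1 / K * pmf ?C (snd x)" if "x \<in> A1" for x
    proof -
      have "fst x \<in> set_pmf ?U" using that by (auto simp: A1_def D_def set_joint_pmf)
      then show ?thesis using pU by (simp add: q_def case_prod_beta)
    qed
    ultimately show ?thesis by (simp add: sum_distrib_left sum.reindex)
  qed
  also have "\<dots> \<le> 1 / K * sum (pmf ?C) (set_pmf ?C)"
  proof -
    have "snd ` A1 \<subseteq> set_pmf ?C" by (auto simp: A1_def)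
    then show ?thesis using fC by (intro mult_left_mono sum_mono2) auto
  qed
  finally have q1: "sum q A1 \<le> 1 / K" using fC by (simp add: sum_pmf_eq_1)
  have "A2 \<subseteq> set_pmf ?U \<times> set_pmf ?C" by (force simp: A2_def D_def set_joint_pmf)
  then have "sum q A2 \<le> sum q (set_pmf ?U \<times> set_pmf ?C)"
    using fC sU by (intro sum_mono2) (auto simp: q_def)
  also have "\<dots> = 1"
    using fC sU by (simp add: q_def sum.cartesian_product[symmetric] sum_product[symmetric] sum_pmf_eq_1)
  finally have q2: "sum q A2 \<le> 1" .
  define Pc where "Pc = sum (pmf D) A1"
  define Pe where "Pe = sum (pmf D) A2"
  have log_sums: "Pc * log 2 (Pc / (1 / K)) + Pe * log 2 (Pe / 1) \<le> pmf_mutual_info D"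
    unfolding mi Pc_def Pe_def using fA q1 q2 q_pos
    by (intro add_mono log_sum_inequality) (auto simp: A1_def A2_def q_def)
  have nonneg: "0 \<le> Pc" "0 \<le> Pe" by (simp_all add: Pc_def Pe_def sum_nonneg)
  have "Pc * log 2 (Pc / (1 / K)) = Pc * log 2 K + Pc * log 2 Pc"
  proof (cases "Pc = 0")
    case False
    then show ?thesis using nonneg K by (simp add: log_mult_pos algebra_simps)
  qed simp
  moreover have "bin_entropy Pc \<le> 1"
    using total nonneg by (intro bin_entropy_le_one) (auto simp: Pc_def Pe_def)
  moreover have "1 - Pc = Pe" using total by (simp add: Pc_def Pe_def)
  ultimately have "Pc * log 2 K - 1 \<le> pmf_mutual_info D"
    using log_sums by (simp add: bin_entropy_def)
  moreover have "1 - Pe = Pc" using \<open>1 - Pc = Pe\<close> by simp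
  ultimately show ?thesis using err by (simp flip: Pe_def)
qed

section \<open>Codes for the block-fading wiretap channel\<close>

lemma cond_mutual_info_bind_state:
  assumes fS: "finite (set_pmf S)" and fD: "\<And>s. s \<in> set_pmf S \<Longrightarrow> finite (set_pmf (D s))"
  shows "cond_mutual_info (bind_pmf S (\<lambda>s. map_pmf (\<lambda>(m, c). (m, s, c)) (D s)))
           = (\<Sum>s\<in>set_pmf S. pmf S s * pmf_mutual_info (D s))"
proof -
  define J where "J = bind_pmf S (\<lambda>s. map_pmf (\<lambda>(m, c). (m, s, c)) (D s))"
  have pJ: "pmf J (m, s, c) = pmf S s * pmf (D s) (m, c)" for m s c
    using pmf_bind_tagged[OF fS, of "\<lambda>s (m, c). (m, s, c)" D s "(m, c)"]
    by (simp add: J_def inj_def)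
  have pB: "pmf (map_pmf (\<lambda>(a, b, c). b) J) s = pmf S s" for s
  proof -
    have "map_pmf (\<lambda>(a, b, c). b) J = S"
      by (simp add: J_def map_bind_pmf pmf.map_comp o_def case_prod_beta map_pmf_const
          bind_return_pmf')
    then show ?thesis by simp
  qed
  have pAB: "pmf (map_pmf (\<lambda>(a, b, c). (a, b)) J) (m, s) = pmf S s * pmf (map_pmf fst (D s)) m" for m s
    using pmf_bind_tagged[OF fS, of "\<lambda>s m. (m, s)" "\<lambda>s. map_pmf fst (D s)" s m]
    by (simp add: J_def map_bind_pmf pmf.map_comp o_def case_prod_beta inj_def)
  have pBC: "pmf (map_pmf (\<lambda>(a, b, c). (b, c)) J) (s, c) = pmf S s * pmf (map_pmf snd (D s)) c" for s c
    using pmf_bind_tagged[OF fS, of Pair "\<lambda>s. map_pmf snd (D s)" s c]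
    by (simp add: J_def map_bind_pmf pmf.map_comp o_def case_prod_beta inj_def)
  have inj: "inj_on (\<lambda>(s, (m, c)). (m, s, c)) (SIGMA s:set_pmf S. set_pmf (D s))"
    by (auto simp: inj_on_def)
  have sJ: "set_pmf J = (\<lambda>(s, (m, c)). (m, s, c)) ` (SIGMA s:set_pmf S. set_pmf (D s))"
    by (auto simp: J_def set_bind_pmf image_iff) force
  let ?B = "pmf (map_pmf (\<lambda>(a, b, c). b) J)" and ?AB = "pmf (map_pmf (\<lambda>(a, b, c). (a, b)) J)"
    and ?BC = "pmf (map_pmf (\<lambda>(a, b, c). (b, c)) J)"
  have "cond_mutual_info J = (\<Sum>(s, (m, c))\<in>(SIGMA s:set_pmf S. set_pmf (D s)).
      pmf J (m, s, c) * log 2 (pmf J (m, s, c) * ?B s / (?AB (m, s) * ?BC (s, c))))"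
    unfolding cond_mutual_info_def sJ sum.reindex[OF inj] by (simp add: case_prod_beta o_def)
  also have "\<dots> = (\<Sum>(s, (m, c))\<in>(SIGMA s:set_pmf S. set_pmf (D s)).
      pmf S s * (pmf (D s) (m, c) *
        log 2 (pmf (D s) (m, c) / (pmf (map_pmf fst (D s)) m * pmf (map_pmf snd (D s)) c))))"
  proof (intro sum.cong refl, clarify)
    fix s m c assume "s \<in> set_pmf S"
    then have "pmf S s \<noteq> 0" by (simp add: set_pmf_eq)
    then show "pmf J (m, s, c) * log 2 (pmf J (m, s, c) * ?B s / (?AB (m, s) * ?BC (s, c))) =
      pmf S s * (pmf (D s) (m, c) *
        log 2 (pmf (D s) (m, c) / (pmf (map_pmf fst (D s)) m * pmf (map_pmf snd (D s)) c)))"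
      unfolding pJ pB pAB pBC by (simp add: field_simps)
  qed
  also have "\<dots> = (\<Sum>s\<in>set_pmf S. \<Sum>(m, c)\<in>set_pmf (D s). pmf S s * (pmf (D s) (m, c) *
        log 2 (pmf (D s) (m, c) / (pmf (map_pmf fst (D s)) m * pmf (map_pmf snd (D s)) c))))"
    by (rule sum.Sigma[OF fS ballI[OF fD], symmetric])
  also have "\<dots> = (\<Sum>s\<in>set_pmf S. pmf S s * pmf_mutual_info (D s))"
    by (simp add: pmf_mutual_info_def sum_distrib_left case_prod_beta)
  finally show ?thesis by (simp add: J_def)
qed

definition truncate_bits :: "nat \<Rightarrow> (nat \<Rightarrow> bool) \<Rightarrow> (nat \<Rightarrow> bool)" where
  "truncate_bits L x = (\<lambda>i. if i < L then x i else False)"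

lemma finite_set_map_truncate_bits: "finite (set_pmf (map_pmf (truncate_bits L) P))"
proof (rule finite_subset)
  show "set_pmf (map_pmf (truncate_bits L) P) \<subseteq> PiE_dflt {..<L} False (\<lambda>_. UNIV)"
    by (auto simp: truncate_bits_def PiE_dflt_def)
qed auto

text \<open>Joint law of message and output given the state vector \<open>s\<close>; only the first \<open>N * B\<close>
  input bits reach the channel.\<close>
definition state_channel_pmf ::
  "nat \<Rightarrow> nat \<Rightarrow> real \<Rightarrow> real \<Rightarrow> nat \<Rightarrow> (nat \<Rightarrow> (nat \<Rightarrow> bool) pmf) \<Rightarrow> (nat \<Rightarrow> nat)
     \<Rightarrow> (nat \<times> (nat \<Rightarrow> bool)) pmf" where
  "state_channel_pmf N B a b K f s =
     joint_pmf (pmf_of_set {..<K}) (\<lambda>m. xor_conv (map_pmf (truncate_bits (N * B)) (f m)) (noise_pmf N B a b s))"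

abbreviation states_pmf :: "nat \<Rightarrow> real \<Rightarrow> (nat \<Rightarrow> nat) pmf" where
  "states_pmf B q1 \<equiv> Pi_pmf {..<B} 1 (\<lambda>_. state_pmf q1)"

lemma finite_set_states_pmf: "finite (set_pmf (states_pmf B q1))"
  by (intro finite_set_Pi_pmf) (auto simp: state_pmf_def)

lemma finite_set_state_channel_pmf:
  "K \<ge> 1 \<Longrightarrow> finite (set_pmf (state_channel_pmf N B a b K f s))"
  by (auto simp: state_channel_pmf_def set_joint_pmf lessThan_empty_iff
      intro!: finite_set_xor_conv finite_set_map_truncate_bits)

lemma chan_out_eq_bit_xor:
  "e \<in> set_pmf (noise_pmf N B a b s) \<Longrightarrow> chan_out N B x e = bit_xor (truncate_bits (N * B) x) e"
  using set_Pi_pmf_subset[of "{..<N * B}" False "\<lambda>i. bernoulli_pmf (xover a b (s (i div N)))"]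
  by (force simp: chan_out_def bit_xor_def truncate_bits_def noise_pmf_def)

text \<open>The encoder does not see the states, so the code distribution is a mixture over the
  state vector of the per-state channel laws.\<close>
lemma outputs_eq_state_mixture:
  "bind_pmf (pmf_of_set {..<K}) (\<lambda>m. bind_pmf (f m) (\<lambda>x. bind_pmf (states_pmf B q1) (\<lambda>s.
      bind_pmf (noise_pmf N B a b s) (\<lambda>e. return_pmf (m, s, chan_out N B x e)))))
   = bind_pmf (states_pmf B q1) (\<lambda>s. map_pmf (\<lambda>(m, c). (m, s, c)) (state_channel_pmf N B a b K f s))"
  (is "?lhs = ?rhs")
proof -
  have "?lhs = bind_pmf (states_pmf B q1) (\<lambda>s. bind_pmf (pmf_of_set {..<K}) (\<lambda>m. bind_pmf (f m) (\<lambda>x.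
      bind_pmf (noise_pmf N B a b s) (\<lambda>e. return_pmf (m, s, bit_xor (truncate_bits (N * B) x) e)))))"
    by (subst bind_commute_pmf, subst bind_commute_pmf[of "pmf_of_set _"])
      (intro bind_pmf_cong refl, simp add: chan_out_eq_bit_xor cong: bind_pmf_cong)
  also have "\<dots> = ?rhs"
    by (simp add: state_channel_pmf_def joint_pmf_def xor_conv_def map_pmf_def bind_assoc_pmf
        bind_return_pmf)
  finally show ?thesis .
qed

lemma code_dist_Bob:
  "map_pmf (\<lambda>(m, s, y, z). (m, s, y)) (code_dist N B q1 p1 p2 ps1 ps2 K f)
     = bind_pmf (states_pmf B q1) (\<lambda>s. map_pmf (\<lambda>(m, c). (m, s, c)) (state_channel_pmf N B p1 p2 K f s))"
  unfolding outputs_eq_state_mixture[symmetric]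
  by (simp add: code_dist_def map_pmf_def bind_assoc_pmf bind_return_pmf bind_pmf_const)

lemma code_dist_Eve:
  "map_pmf (\<lambda>(m, s, y, z). (m, s, z)) (code_dist N B q1 p1 p2 ps1 ps2 K f)
     = bind_pmf (states_pmf B q1) (\<lambda>s. map_pmf (\<lambda>(m, c). (m, s, c)) (state_channel_pmf N B ps1 ps2 K f s))"
  unfolding outputs_eq_state_mixture[symmetric]
  by (simp add: code_dist_def map_pmf_def bind_assoc_pmf bind_return_pmf bind_pmf_const)

lemma err_prob_eq_state_average:
  "err_prob N B q1 p1 p2 ps1 ps2 K f g
     = (\<Sum>s\<in>set_pmf (states_pmf B q1). pmf (states_pmf B q1) s *
          measure_pmf.prob (state_channel_pmf N B p1 p2 K f s) {(m, c). g c s \<noteq> m})"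
proof -
  let ?E = "\<lambda>s. {(m, c). g c s \<noteq> m}"
  have "err_prob N B q1 p1 p2 ps1 ps2 K f g
      = measure_pmf.prob (map_pmf (\<lambda>(m, s, y, z). (m, s, y)) (code_dist N B q1 p1 p2 ps1 ps2 K f))
          {(m, s, y). g y s \<noteq> m}"
    unfolding err_prob_def measure_map_pmf by (rule arg_cong) auto
  also have "\<dots> = (\<Sum>s\<in>set_pmf (states_pmf B q1). pmf (states_pmf B q1) s *
      measure_pmf.prob (state_channel_pmf N B p1 p2 K f s) (?E s))"
    unfolding code_dist_Bob prob_bind_pmf_eq_sum[OF finite_set_states_pmf]
    by (intro sum.cong refl arg_cong[where f = "(*) _"])
      (auto simp: measure_map_pmf vimage_def case_prod_beta
        intro!: arg_cong[where f = "measure_pmf.prob _"])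
  finally show ?thesis .
qed

lemma leakage_eq_state_average:
  assumes "K \<ge> 1"
  shows "leakage N B q1 p1 p2 ps1 ps2 K f
     = (\<Sum>s\<in>set_pmf (states_pmf B q1). pmf (states_pmf B q1) s *
          pmf_mutual_info (state_channel_pmf N B ps1 ps2 K f s))"
  unfolding leakage_def code_dist_Eve
  using assms by (intro cond_mutual_info_bind_state finite_set_states_pmf finite_set_state_channel_pmf)

lemma sum_states_pmf_component:
  fixes \<phi> :: "nat \<Rightarrow> real"
  assumes "k < B" "0 \<le> q1" "q1 \<le> 1"
  shows "(\<Sum>s\<in>set_pmf (states_pmf B q1). pmf (states_pmf B q1) s * \<phi> (s k)) = q1 * \<phi> 1 + (1 - q1) * \<phi> 2"
proof -
  have "(\<Sum>s\<in>set_pmf (states_pmf B q1). pmf (states_pmf B q1) s * \<phi> (s k))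
      = measure_pmf.expectation (map_pmf (\<lambda>s. s k) (states_pmf B q1)) \<phi>"
    by (simp add: integral_measure_pmf[OF finite_set_states_pmf])
  also have "map_pmf (\<lambda>s. s k) (states_pmf B q1) = state_pmf q1"
    using assms by (simp add: Pi_pmf_component)
  finally show ?thesis
    using assms by (simp add: state_pmf_def integral_measure_pmf[of UNIV] UNIV_bool)
qed

lemma state_channel_converse:
  assumes "0 \<le> p1" "p1 \<le> ps1" "ps1 \<le> 1/2" "0 \<le> p2" "p2 \<le> ps2" "ps2 \<le> 1/2" and K: "K \<ge> 1"
  shows "(1 - measure_pmf.prob (state_channel_pmf N B p1 p2 K f s) {(m, c). h c \<noteq> m}) * log 2 K - 1
         \<le> pmf_mutual_info (state_channel_pmf N B ps1 ps2 K f s)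
           + (\<Sum>i<N * B. bin_entropy (xover ps1 ps2 (s (i div N))) - bin_entropy (xover p1 p2 (s (i div N))))"
proof -
  obtain R where R: "finite (set_pmf R)" "noise_pmf N B ps1 ps2 s = xor_conv (noise_pmf N B p1 p2 s) R"
    using noise_pmf_degraded[OF assms(1-6)] by blast
  have fU: "finite (set_pmf (pmf_of_set {..<K}))" using K by (simp add: lessThan_empty_iff)
  have "(1 - measure_pmf.prob (state_channel_pmf N B p1 p2 K f s) {(m, c). h c \<noteq> m}) * log 2 K - 1
      \<le> pmf_mutual_info (state_channel_pmf N B p1 p2 K f s)"
    unfolding state_channel_pmf_def
    using K by (intro fano_inequality finite_set_xor_conv finite_set_map_truncate_bits finite_set_noise_pmf)
  also have "pmf_mutual_info (state_channel_pmf N B p1 p2 K f s)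
      \<le> pmf_mutual_info (state_channel_pmf N B ps1 ps2 K f s)
        + (pmf_entropy (noise_pmf N B ps1 ps2 s) - pmf_entropy (noise_pmf N B p1 p2 s))"
    using pmf_mutual_info_degraded_gap_le[where P = "\<lambda>m. map_pmf (truncate_bits (N * B)) (f m)"
        and Q = "noise_pmf N B p1 p2 s",
        OF fU finite_set_map_truncate_bits finite_set_noise_pmf R(1)]
    by (simp add: state_channel_pmf_def R(2))
  finally show ?thesis
    using assms by (simp add: pmf_entropy_noise_pmf sum_subtractf)
qed

definition degraded_secrecy_rate :: "real \<Rightarrow> real \<Rightarrow> real \<Rightarrow> real \<Rightarrow> real \<Rightarrow> real" where
  "degraded_secrecy_rate q1 p1 p2 ps1 ps2 =
     q1 * (bin_entropy ps1 - bin_entropy p1) + (1 - q1) * (bin_entropy ps2 - bin_entropy p2)"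

lemma code_converse:
  assumes q: "0 \<le> q1" "q1 \<le> 1"
    and p: "0 \<le> p1" "p1 \<le> ps1" "ps1 \<le> 1/2" "0 \<le> p2" "p2 \<le> ps2" "ps2 \<le> 1/2" and K: "K \<ge> 1"
  shows "(1 - err_prob N B q1 p1 p2 ps1 ps2 K f g) * log 2 K - 1
         \<le> leakage N B q1 p1 p2 ps1 ps2 K f + real (N * B) * degraded_secrecy_rate q1 p1 p2 ps1 ps2"
proof -
  let ?S = "states_pmf B q1"
  let ?e = "\<lambda>s. measure_pmf.prob (state_channel_pmf N B p1 p2 K f s) {(m, c). g c s \<noteq> m}"
  let ?\<Delta> = "\<lambda>t. bin_entropy (xover ps1 ps2 t) - bin_entropy (xover p1 p2 t)"
  let ?gap = "\<lambda>s. \<Sum>i<N * B. ?\<Delta> (s (i div N))"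
  have "(1 - err_prob N B q1 p1 p2 ps1 ps2 K f g) * log 2 K - 1
      = (\<Sum>s\<in>set_pmf ?S. pmf ?S s * ((- log 2 K) * ?e s + (log 2 K - 1)))"
    unfolding sum_pmf_affine[OF finite_set_states_pmf] err_prob_eq_state_average by (simp add: algebra_simps)
  also have "\<dots> \<le> (\<Sum>s\<in>set_pmf ?S. pmf ?S s * (pmf_mutual_info (state_channel_pmf N B ps1 ps2 K f s) + ?gap s))"
  proof (intro sum_mono mult_left_mono)
    fix s
    show "(- log 2 K) * ?e s + (log 2 K - 1) \<le> pmf_mutual_info (state_channel_pmf N B ps1 ps2 K f s) + ?gap s"
      using state_channel_converse[OF p K, of N B f s "\<lambda>c. g c s"] by (simp add: algebra_simps)
  qed simp
  also have "\<dots> = leakage N B q1 p1 p2 ps1 ps2 K f + (\<Sum>s\<in>set_pmf ?S. pmf ?S s * ?gap s)"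
    using K by (simp add: leakage_eq_state_average distrib_left sum.distrib)
  also have "(\<Sum>s\<in>set_pmf ?S. pmf ?S s * ?gap s) = (\<Sum>i<N * B. \<Sum>s\<in>set_pmf ?S. pmf ?S s * ?\<Delta> (s (i div N)))"
    unfolding sum_distrib_left by (rule sum.swap)
  also have "\<dots> = (\<Sum>i<N * B. degraded_secrecy_rate q1 p1 p2 ps1 ps2)"
  proof (intro sum.cong refl)
    fix i assume "i \<in> {..<N * B}"
    then have "i div N < B" by (simp add: less_mult_imp_div_less mult.commute)
    then show "(\<Sum>s\<in>set_pmf ?S. pmf ?S s * ?\<Delta> (s (i div N))) = degraded_secrecy_rate q1 p1 p2 ps1 ps2"
      using sum_states_pmf_component[OF _ q, of "i div N" B ?\<Delta>]
      by (simp add: degraded_secrecy_rate_def xover_def)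
  qed
  finally show ?thesis by simp
qed

lemma achievable_rate_le_degraded_secrecy_rate:
  assumes q: "0 \<le> q1" "q1 \<le> 1"
    and p: "0 \<le> p1" "p1 \<le> ps1" "ps1 \<le> 1/2" "0 \<le> p2" "p2 \<le> ps2" "ps2 \<le> 1/2"
    and "achievable_rate q1 p1 p2 ps1 ps2 R"
  shows "R \<le> degraded_secrecy_rate q1 p1 p2 ps1 ps2"
proof -
  obtain N B K :: "nat \<Rightarrow> nat" and f :: "nat \<Rightarrow> nat \<Rightarrow> (nat \<Rightarrow> bool) pmf"
    and g :: "nat \<Rightarrow> (nat \<Rightarrow> bool) \<Rightarrow> (nat \<Rightarrow> nat) \<Rightarrow> nat" where
    N: "filterlim N at_top sequentially" and B: "filterlim B at_top sequentially"
    and K: "\<forall>n. K n \<ge> 1"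
    and rate: "\<forall>\<epsilon>>0. eventually (\<lambda>n. log 2 (real (K n)) / real (N n * B n) \<ge> R - \<epsilon>) sequentially"
    and err: "(\<lambda>n. err_prob (N n) (B n) q1 p1 p2 ps1 ps2 (K n) (f n) (g n)) \<longlonglongrightarrow> 0"
    and leak: "(\<lambda>n. leakage (N n) (B n) q1 p1 p2 ps1 ps2 (K n) (f n) / real (N n * B n)) \<longlonglongrightarrow> 0"
    using assms(9) unfolding achievable_rate_def by blast
  define C where "C = degraded_secrecy_rate q1 p1 p2 ps1 ps2"
  define L where "L = (\<lambda>n. real (N n * B n))"
  define E where "E = (\<lambda>n. err_prob (N n) (B n) q1 p1 p2 ps1 ps2 (K n) (f n) (g n))"
  define Lk where "Lk = (\<lambda>n. leakage (N n) (B n) q1 p1 p2 ps1 ps2 (K n) (f n))"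
  have L_at_top: "filterlim L at_top sequentially"
    unfolding L_def of_nat_mult
    using filterlim_compose[OF filterlim_real_sequentially N] filterlim_compose[OF filterlim_real_sequentially B]
    by (rule filterlim_at_top_mult_at_top)
  then have L_pos: "eventually (\<lambda>n. 0 < L n) sequentially"
    by (simp add: filterlim_at_top_dense)
  have upper: "(\<lambda>n. Lk n / L n + C + inverse (L n)) \<longlonglongrightarrow> 0 + C + 0"
    using leak tendsto_inverse_0_at_top[OF L_at_top] unfolding Lk_def L_def by (intro tendsto_intros)
  have lower: "(\<lambda>n. (1 - E n) * (R - \<epsilon>)) \<longlonglongrightarrow> (1 - 0) * (R - \<epsilon>)" for \<epsilon>
    using err unfolding E_def by (intro tendsto_intros)
  have bound: "eventually (\<lambda>n. (1 - E n) * (R - \<epsilon>) \<le> Lk n / L n + C + inverse (L n)) sequentially"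
    if "0 < \<epsilon>" for \<epsilon>
    using rate[rule_format, OF that] L_pos
  proof eventually_elim
    case (elim n)
    have "0 \<le> 1 - E n" by (simp add: E_def err_prob_def measure_pmf.prob_le_1)
    then have "(1 - E n) * (R - \<epsilon>) \<le> (1 - E n) * (log 2 (K n) / L n)"
      using elim by (intro mult_left_mono) (simp_all add: L_def)
    also have "\<dots> \<le> (Lk n + L n * C + 1) / L n"
      unfolding times_divide_eq_right
      using code_converse[OF q p, of "K n" "N n" "B n" "f n" "g n"] K elim
      by (intro divide_right_mono) (simp_all add: E_def Lk_def L_def C_def)
    finally show ?case using elim by (simp add: field_simps)
  qed
  have "R \<le> C + \<epsilon>" if "0 < \<epsilon>" for \<epsilon>
    using tendsto_le[OF trivial_limit_sequentially upper lower bound[OF that]] by simp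
  then show ?thesis unfolding C_def by (rule field_le_epsilon)
qed

theorem lemma1:
  fixes q1 q2 p1 p2 ps1 ps2 :: real
  assumes "0 \<le> q1" "q1 \<le> 1" "q2 = 1 - q1"
    and "0 \<le> p1" "p1 \<le> p2" "p2 \<le> 1/2"
    and "0 \<le> ps1" "ps1 \<le> ps2" "ps2 \<le> 1/2"
    and "p1 \<le> ps1" "p2 \<le> ps2"
  shows "secrecy_capacity_CSI_D q1 p1 p2 ps1 ps2
           \<le> ereal (q1 * (bin_entropy ps1 - bin_entropy p1) + q2 * (bin_entropy ps2 - bin_entropy p2))"
  unfolding secrecy_capacity_CSI_D_def
proof (rule Sup_least, clarify)
  fix R assume "achievable_rate q1 p1 p2 ps1 ps2 R"
  then have "R \<le> degraded_secrecy_rate q1 p1 p2 ps1 ps2"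
    using assms by (intro achievable_rate_le_degraded_secrecy_rate) auto
  then show "ereal R \<le> ereal (q1 * (bin_entropy ps1 - bin_entropy p1) + q2 * (bin_entropy ps2 - bin_entropy p2))"
    using assms by (simp add: degraded_secrecy_rate_def)
qed
end
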